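(* Let $P$ and $Q$ be lattice paths from $(0,0)$ to $(m,r)$ with $P$ never going above $Q$. Then the dimension of the lattice path matroid polytope $\mathcal{P}(M[P,Q])$ is $m+r-k+1$, where $k$ is the number of intersection points (common lattice points) of $P$ and $Q$.
   Context: Lattice paths use steps $E=(1,0)$ and $N=(0,1)$ and are written as words $p_1p_2\cdots p_{m+r}$ in $E,N$. For lattice paths $P,Q$ from $(0,0)$ to $(m,r)$ with $P$ never above $Q$, let $u_1<\dots<u_r$ be the positions of the North steps of $P$ and $l_1<\dots<l_r$ those of $Q$; $M[P,Q]$ is the transversal matroid on ground set $[m+r]$ with presentation $\{[l_i,u_i]: i\in[r]\}$. Equivalently, an $r$-subset $B\subseteq[m+r]$ is a basis iff the lattice path having North steps exactly at the positions in $B$ (East steps elsewhere) stays in the region bounded by $P$ and $Q$. The lattice path matroid polytope is $\mathcal{P}(M[P,Q])=\mathrm{conv}\{e_B : B \text{ a basis}\}\subseteq\mathbb{R}^{m+r}$, where $e_B=\sum_{b\in B}e_b$ and $e_i$ are the standard basis vectors. *)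

theory Defs
  imports "HOL-Analysis.Analysis"
begin

text \<open>Lattice path steps: E = (1,0), N = (0,1). A path is a word of steps;
positions are 1-indexed.\<close>
datatype step = E | N

definition npos :: "step list \<Rightarrow> nat set" where
  "npos p = {i. 1 \<le> i \<and> i \<le> length p \<and> p ! (i - 1) = N}"

definition nth_npos :: "step list \<Rightarrow> nat \<Rightarrow> nat" where
  "nth_npos p i = sorted_list_of_set (npos p) ! (i - 1)"

definition is_lattice_path :: "nat \<Rightarrow> nat \<Rightarrow> step list \<Rightarrow> bool" where
  "is_lattice_path m r p \<longleftrightarrow> count_list p E = m \<and> count_list p N = r"

definition pt :: "step list \<Rightarrow> nat \<Rightarrow> nat \<times> nat" where
  "pt p i = (count_list (take i p) E, count_list (take i p) N)"

definition lattice_points :: "step list \<Rightarrow> (nat \<times> nat) set" where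
  "lattice_points p = pt p ` {0..length p}"

definition never_above :: "step list \<Rightarrow> step list \<Rightarrow> bool" where
  "never_above P Q \<longleftrightarrow> (\<forall>i \<le> length P. count_list (take i P) N \<le> count_list (take i Q) N)"

text \<open>Bases of the transversal matroid M[P,Q] with presentation
  {[l_i,u_i] : i in [r]}: the transversals of the presentation.\<close>
definition lpm_basis :: "step list \<Rightarrow> step list \<Rightarrow> nat \<Rightarrow> nat set \<Rightarrow> bool" where
  "lpm_basis P Q r B \<longleftrightarrow>
     (\<exists>f. bij_betw f {1..r} B \<and> (\<forall>i\<in>{1..r}. nth_npos Q i \<le> f i \<and> f i \<le> nth_npos P i))"

text \<open>The lattice path matroid polytope in R^{m+r}; the coordinates [m+r] are
  identified with the finite index type 'n via the bijection idx.\<close>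
definition lpm_polytope :: "(nat \<Rightarrow> 'n::finite) \<Rightarrow> step list \<Rightarrow> step list \<Rightarrow> nat \<Rightarrow> (real ^ 'n) set" where
  "lpm_polytope idx P Q r =
     convex hull {(\<Sum>b\<in>B. axis (idx b) 1) | B. lpm_basis P Q r B}"

end

theory Submission
  imports Defs
begin

text \<open>
  Let n = m + r. Every vertex e_B of the polytope has the same prefix sums
  \<Sum>_{j \<le> a} x_j as the vertex e_{npos P} at the k positions a \<in> {0..n} where P and Q
  touch, since every basis path passes through all common points of P and Q. Conversely,
  at each position a where P lies strictly below Q, moving one North step of a suitable
  basis from position a to a + 1 yields another basis, so e_a - e_{a+1} is a difference
  of vertices. These n + 1 - k vectors are linearly independent and span the subspace
  cut out by the k - 1 nontrivial prefix-sum conditions, so the affine hull of the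
  vertices has dimension n - k + 1.
\<close>

lemma count_list_E_plus_N: "count_list xs E + count_list xs N = length xs"
proof (induction xs)
  case (Cons x xs)
  then show ?case by (cases x) auto
qed simp

lemma count_list_take_le: "count_list (take a xs) x \<le> count_list xs x"
proof -
  have "count_list xs x = count_list (take a xs) x + count_list (drop a xs) x"
    by (metis append_take_drop_id count_list_append)
  then show ?thesis by simp
qed

lemma card_le_sorted_list_of_set_nth:
  fixes S :: "nat set"
  assumes fin: "finite S" and j: "j < card S"
  shows "card {x\<in>S. x \<le> sorted_list_of_set S ! j} = Suc j"
proof -
  define s where "s = sorted_list_of_set S"
  have ss: "sorted_wrt (<) s" using fin by (simp add: s_def)
  have sets: "set s = S" using fin by (simp add: s_def)
  have jl: "j < length s" using j by (simp add: s_def)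
  have "{x\<in>S. x \<le> s!j} = (!) s ` {..j}"
  proof (intro equalityI subsetI)
    fix x assume "x \<in> {x\<in>S. x \<le> s!j}"
    then have "x \<in> set s" and xle: "x \<le> s!j" using sets by auto
    then obtain i where i: "i < length s" "x = s!i" by (auto simp: in_set_conv_nth)
    have "i \<le> j"
    proof (rule ccontr)
      assume "\<not> i \<le> j"
      then have "s!j < s!i" using sorted_wrt_nth_less[OF ss, of j i] i by simp
      then show False using xle i by simp
    qed
    then show "x \<in> (!) s ` {..j}" using i by auto
  next
    fix x assume "x \<in> (!) s ` {..j}"
    then obtain i where i: "i \<le> j" "x = s!i" by auto
    have "s!i \<le> s!j"
      using sorted_wrt_nth_less[OF ss, of i j] i jl by (cases "i = j") auto
    moreover have "s!i \<in> S" using i jl sets by auto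
    ultimately show "x \<in> {x\<in>S. x \<le> s!j}" using i by auto
  qed
  moreover have "inj_on ((!) s) {..j}"
    using jl by (auto simp: inj_on_def s_def nth_eq_iff_index_eq)
  ultimately show ?thesis using card_image by (fastforce simp: s_def)
qed

lemma sorted_list_of_set_nth_le_iff:
  fixes S :: "nat set"
  assumes fin: "finite S" and j: "j < card S"
  shows "sorted_list_of_set S ! j \<le> a \<longleftrightarrow> j < card {x\<in>S. x \<le> a}"
proof
  let ?y = "sorted_list_of_set S ! j"
  have card_y: "card {x\<in>S. x \<le> ?y} = Suc j"
    by (rule card_le_sorted_list_of_set_nth[OF fin j])
  show "j < card {x\<in>S. x \<le> a}" if "?y \<le> a"
  proof -
    have "{x\<in>S. x \<le> ?y} \<subseteq> {x\<in>S. x \<le> a}" using that by auto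
    moreover have "finite {x\<in>S. x \<le> a}" using fin by simp
    ultimately have "Suc j \<le> card {x\<in>S. x \<le> a}" using card_y card_mono by metis
    then show ?thesis by simp
  qed
  show "?y \<le> a" if "j < card {x\<in>S. x \<le> a}"
  proof (rule ccontr)
    assume "\<not> ?y \<le> a"
    then have "{x\<in>S. x \<le> a} \<subseteq> {x\<in>S. x \<le> ?y} - {?y}" by auto
    moreover have "finite ({x\<in>S. x \<le> ?y} - {?y})" using fin by simp
    moreover have "card ({x\<in>S. x \<le> ?y} - {?y}) = j"
    proof -
      have "?y \<in> S" using nth_mem[of j "sorted_list_of_set S"] fin j by simp
      then show ?thesis using card_y fin by (subst card_Diff_singleton) auto
    qed
    ultimately have "card {x\<in>S. x \<le> a} \<le> j" using card_mono by metis
    then show False using that by simp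
  qed
qed

lemma npos_subset: "npos p \<subseteq> {1..length p}"
  by (auto simp: npos_def)

lemma finite_npos: "finite (npos p)"
  using npos_subset finite_subset by blast

lemma card_npos_atMost: "card (npos p \<inter> {..a}) = count_list (take a p) N"
proof (induction a)
  case 0
  have "npos p \<inter> {..0} = {}" by (auto simp: npos_def)
  then show ?case by simp
next
  case (Suc a)
  show ?case
  proof (cases "a < length p")
    case True
    have "npos p \<inter> {..Suc a} = (npos p \<inter> {..a}) \<union> (if p!a = N then {Suc a} else {})"
      using True by (auto simp: npos_def le_Suc_eq)
    then have "card (npos p \<inter> {..Suc a}) = card (npos p \<inter> {..a}) + (if p!a = N then 1 else 0)"
      using finite_npos by auto
    then show ?thesis using Suc True by (simp add: take_Suc_conv_app_nth)
  next
    case False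
    then have "npos p \<inter> {..Suc a} = npos p \<inter> {..a}" by (auto simp: npos_def)
    then show ?thesis using Suc False by simp
  qed
qed

lemma card_npos: "card (npos p) = count_list p N"
proof -
  have "npos p \<inter> {..length p} = npos p" by (auto simp: npos_def)
  then show ?thesis using card_npos_atMost[of p "length p"] by simp
qed

lemma nth_npos_le_iff:
  assumes "1 \<le> i" "i \<le> card (npos p)"
  shows "nth_npos p i \<le> a \<longleftrightarrow> i \<le> count_list (take a p) N"
proof -
  have "{x\<in>npos p. x \<le> a} = npos p \<inter> {..a}" by auto
  moreover have "i - 1 < k \<longleftrightarrow> i \<le> k" for k using assms(1) by linarith
  ultimately show ?thesis
    using sorted_list_of_set_nth_le_iff[OF finite_npos, of "i - 1" p a] assms card_npos_atMost[of p a]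
    by (simp add: nth_npos_def)
qed

lemma nth_npos_in_npos:
  assumes "1 \<le> i" "i \<le> card (npos p)"
  shows "nth_npos p i \<in> npos p"
proof -
  have "i - 1 < length (sorted_list_of_set (npos p))" using assms by simp
  then show ?thesis unfolding nth_npos_def
    using nth_mem set_sorted_list_of_set[OF finite_npos] by metis
qed

lemma nth_npos_strict_mono:
  assumes "1 \<le> i" "i < j" "j \<le> card (npos p)"
  shows "nth_npos p i < nth_npos p j"
proof -
  have ss: "sorted_wrt (<) (sorted_list_of_set (npos p))" using finite_npos by simp
  show ?thesis unfolding nth_npos_def
    using sorted_wrt_nth_less[OF ss, of "i - 1" "j - 1"] assms by simp
qed

locale lattice_path_pair =
  fixes P Q :: "step list" and m r :: nat
  assumes path_P: "is_lattice_path m r P" and path_Q: "is_lattice_path m r Q"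
    and P_never_above_Q: "never_above P Q"
begin

abbreviation "n \<equiv> m + r"
abbreviation "hP a \<equiv> count_list (take a P) N"
abbreviation "hQ a \<equiv> count_list (take a Q) N"
abbreviation "u i \<equiv> nth_npos P i"
abbreviation "l i \<equiv> nth_npos Q i"

lemma length_P: "length P = n"
  using path_P count_list_E_plus_N[of P] by (simp add: is_lattice_path_def)

lemma length_Q: "length Q = n"
  using path_Q count_list_E_plus_N[of Q] by (simp add: is_lattice_path_def)

lemma card_npos_P: "card (npos P) = r"
  using path_P by (simp add: is_lattice_path_def card_npos)

lemma card_npos_Q: "card (npos Q) = r"
  using path_Q by (simp add: is_lattice_path_def card_npos)

lemma hP_le_hQ: "a \<le> n \<Longrightarrow> hP a \<le> hQ a"
  using P_never_above_Q length_P by (simp add: never_above_def)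

lemma hP_le_r: "hP a \<le> r"
  using path_P count_list_take_le[of a P N] by (simp add: is_lattice_path_def)

lemma hQ_le_r: "hQ a \<le> r"
  using path_Q count_list_take_le[of a Q N] by (simp add: is_lattice_path_def)

lemma hP_n_eq_hQ_n: "hP n = hQ n"
  using path_P path_Q length_P length_Q by (simp add: is_lattice_path_def)

lemma u_le_iff: "1 \<le> i \<Longrightarrow> i \<le> r \<Longrightarrow> u i \<le> a \<longleftrightarrow> i \<le> hP a"
  using nth_npos_le_iff[of i P a] card_npos_P by simp

lemma l_le_iff: "1 \<le> i \<Longrightarrow> i \<le> r \<Longrightarrow> l i \<le> a \<longleftrightarrow> i \<le> hQ a"
  using nth_npos_le_iff[of i Q a] card_npos_Q by simp

lemma u_in_range: "1 \<le> i \<Longrightarrow> i \<le> r \<Longrightarrow> u i \<in> {1..n}"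
  using nth_npos_in_npos[of i P] card_npos_P npos_subset[of P] length_P by auto

lemma l_in_range: "1 \<le> i \<Longrightarrow> i \<le> r \<Longrightarrow> l i \<in> {1..n}"
  using nth_npos_in_npos[of i Q] card_npos_Q npos_subset[of Q] length_Q by auto

lemma l_le_u:
  assumes "1 \<le> i" "i \<le> r"
  shows "l i \<le> u i"
proof -
  have "i \<le> hP (u i)" using u_le_iff[OF assms, of "u i"] by simp
  also have "\<dots> \<le> hQ (u i)" using hP_le_hQ u_in_range[OF assms] by auto
  finally show ?thesis using l_le_iff[OF assms] by simp
qed

lemma u_strict_mono: "1 \<le> i \<Longrightarrow> i < j \<Longrightarrow> j \<le> r \<Longrightarrow> u i < u j"
  using nth_npos_strict_mono[of i j P] card_npos_P by simp

lemma l_strict_mono: "1 \<le> i \<Longrightarrow> i < j \<Longrightarrow> j \<le> r \<Longrightarrow> l i < l j"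
  using nth_npos_strict_mono[of i j Q] card_npos_Q by simp

lemma lpm_basis_subset:
  assumes "lpm_basis P Q r B"
  shows "B \<subseteq> {1..n}"
proof
  fix x assume "x \<in> B"
  moreover obtain f where "bij_betw f {1..r} B" "\<forall>i\<in>{1..r}. l i \<le> f i \<and> f i \<le> u i"
    using assms by (auto simp: lpm_basis_def)
  ultimately obtain i where "i \<in> {1..r}" "x = f i" "l i \<le> f i" "f i \<le> u i"
    by (auto simp: bij_betw_def)
  then show "x \<in> {1..n}" using l_in_range[of i] u_in_range[of i] by auto
qed

text \<open>A basis path passes through every point where P and Q touch.\<close>

lemma card_lpm_basis_prefix:
  assumes "lpm_basis P Q r B" and a: "a \<le> n" "hP a = hQ a"
  shows "card (B \<inter> {1..a}) = hP a"
proof -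
  obtain f where f: "bij_betw f {1..r} B" "\<forall>i\<in>{1..r}. l i \<le> f i \<and> f i \<le> u i"
    using assms by (auto simp: lpm_basis_def)
  have image_f: "f ` {1..r} = B" and inj_f: "inj_on f {1..r}"
    using f(1) by (simp_all add: bij_betw_def)
  have "B \<inter> {1..a} = f ` {1..hP a}"
  proof (intro equalityI subsetI)
    fix x assume x: "x \<in> B \<inter> {1..a}"
    then obtain i where i: "i \<in> {1..r}" "x = f i" using image_f by blast
    have "l i \<le> f i" using f(2) i(1) by blast
    then have "l i \<le> a" using x i(2) by simp
    then show "x \<in> f ` {1..hP a}" using i a(2) l_le_iff[of i a] by simp
  next
    fix x assume "x \<in> f ` {1..hP a}"
    then obtain i where i: "i \<in> {1..hP a}" "x = f i" by blast
    then have ir: "i \<in> {1..r}" using hP_le_r[of a] by simp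
    then have "u i \<le> a" "1 \<le> l i" using u_le_iff[of i a] l_in_range[of i] i(1) by simp_all
    moreover have "l i \<le> f i" "f i \<le> u i" "f i \<in> B" using f(2) ir image_f by blast+
    ultimately show "x \<in> B \<inter> {1..a}" using i(2) by simp
  qed
  moreover have "inj_on f {1..hP a}"
    using inj_on_subset[OF inj_f] hP_le_r[of a] by simp
  ultimately show ?thesis by (simp add: card_image)
qed

lemma
  assumes mono: "\<And>i j. 1 \<le> i \<Longrightarrow> i < j \<Longrightarrow> j \<le> r \<Longrightarrow> f i < f j"
    and bounds: "\<And>i. 1 \<le> i \<Longrightarrow> i \<le> r \<Longrightarrow> l i \<le> f i \<and> f i \<le> u i"
  shows inj_on_strict_mono_transversal: "inj_on f {1..r}"
    and lpm_basis_image: "lpm_basis P Q r (f ` {1..r})"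
proof -
  show inj: "inj_on f {1..r}"
  proof (rule inj_onI)
    fix i j assume "i \<in> {1..r}" "j \<in> {1..r}" "f i = f j"
    then show "i = j" using mono[of i j] mono[of j i] by (metis atLeastAtMost_iff less_irrefl linorder_neqE_nat)
  qed
  then show "lpm_basis P Q r (f ` {1..r})"
    unfolding lpm_basis_def using bounds by (auto simp: bij_betw_def)
qed

lemma lpm_basis_npos_P: "lpm_basis P Q r (npos P)"
proof -
  have "lpm_basis P Q r (u ` {1..r})" and inj: "inj_on u {1..r}"
    using lpm_basis_image[of u] inj_on_strict_mono_transversal[of u] u_strict_mono l_le_u
    by auto
  moreover have "u ` {1..r} = npos P"
  proof (rule card_subset_eq[OF finite_npos])
    show "u ` {1..r} \<subseteq> npos P" using nth_npos_in_npos[of _ P] card_npos_P by auto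
    show "card (u ` {1..r}) = card (npos P)" using card_image[OF inj] card_npos_P by simp
  qed
  ultimately show ?thesis by simp
qed

definition exchange :: "nat \<Rightarrow> nat \<Rightarrow> nat \<Rightarrow> nat" where
  "exchange c x i = (if i \<le> c then l i else if i = Suc c then x else u i)"

context
  fixes c x :: nat
  assumes c: "Suc c \<le> r" and x: "l (Suc c) \<le> x" "x \<le> u (Suc c)"
begin

lemma exchange_strict_mono:
  assumes ij: "1 \<le> i" "i < j" "j \<le> r"
  shows "exchange c x i < exchange c x j"
proof -
  have lu: "l (Suc c) \<le> u (Suc c)" using l_le_u c by simp
  consider "j \<le> c" | "i \<le> c" "j = Suc c" | "i \<le> c" "j > Suc c"
    | "i = Suc c" "j > Suc c" | "i > Suc c"
    using ij by linarith
  then show ?thesis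
  proof cases
    case 1 then show ?thesis using l_strict_mono[of i j] ij by (simp add: exchange_def)
  next
    case 2 then show ?thesis using l_strict_mono[of i "Suc c"] ij x by (simp add: exchange_def)
  next
    case 3 then show ?thesis using l_strict_mono[of i "Suc c"] u_strict_mono[of "Suc c" j] ij lu
      by (simp add: exchange_def)
  next
    case 4 then show ?thesis using u_strict_mono[of "Suc c" j] ij x by (simp add: exchange_def)
  next
    case 5 then show ?thesis using u_strict_mono[of i j] ij by (simp add: exchange_def)
  qed
qed

lemma exchange_bounds: "1 \<le> i \<Longrightarrow> i \<le> r \<Longrightarrow> l i \<le> exchange c x i \<and> exchange c x i \<le> u i"
  using l_le_u x by (simp add: exchange_def)

lemma lpm_basis_exchange: "lpm_basis P Q r (exchange c x ` {1..r})"
  by (rule lpm_basis_image[OF exchange_strict_mono exchange_bounds])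

lemma sum_exchange:
  fixes e :: "nat \<Rightarrow> 'a::comm_monoid_add"
  shows "(\<Sum>b\<in>exchange c x ` {1..r}. e b)
           = e x + (\<Sum>i\<in>{1..r} - {Suc c}. e (if i \<le> c then l i else u i))"
proof -
  have inj: "inj_on (exchange c x) {1..r}"
    by (rule inj_on_strict_mono_transversal[OF exchange_strict_mono exchange_bounds])
  have "(\<Sum>b\<in>exchange c x ` {1..r}. e b) = (\<Sum>i\<in>{1..r}. e (exchange c x i))"
    unfolding sum.reindex[OF inj] by (simp only: o_def)
  also have "\<dots> = e (exchange c x (Suc c)) + (\<Sum>i\<in>{1..r} - {Suc c}. e (exchange c x i))"
    using c by (intro sum.remove) auto
  also have "(\<Sum>i\<in>{1..r} - {Suc c}. e (exchange c x i))
               = (\<Sum>i\<in>{1..r} - {Suc c}. e (if i \<le> c then l i else u i))"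
    by (intro sum.cong) (auto simp: exchange_def)
  also have "exchange c x (Suc c) = x" by (simp add: exchange_def)
  finally show ?thesis .
qed

end

lemma exists_lpm_bases_diff:
  fixes e :: "nat \<Rightarrow> 'a::ab_group_add"
  assumes a: "a \<le> n" "hP a \<noteq> hQ a"
  shows "\<exists>B B'. lpm_basis P Q r B \<and> lpm_basis P Q r B' \<and>
           (\<Sum>b\<in>B. e b) - (\<Sum>b\<in>B'. e b) = e a - e (Suc a)"
proof -
  define c where "c = hP a"
  have "c < hQ a" using hP_le_hQ[OF a(1)] a(2) by (simp add: c_def)
  then have c: "Suc c \<le> r" and la: "l (Suc c) \<le> a"
    using hQ_le_r[of a] l_le_iff[of "Suc c" a] by simp_all
  have ua: "Suc a \<le> u (Suc c)" using u_le_iff[of "Suc c" a] c by (simp add: c_def)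
  show ?thesis
  proof (intro exI conjI)
    show "lpm_basis P Q r (exchange c a ` {1..r})" "lpm_basis P Q r (exchange c (Suc a) ` {1..r})"
      using lpm_basis_exchange[OF c] la ua by simp_all
    show "(\<Sum>b\<in>exchange c a ` {1..r}. e b) - (\<Sum>b\<in>exchange c (Suc a) ` {1..r}. e b)
            = e a - e (Suc a)"
      using sum_exchange[OF c, of a e] sum_exchange[OF c, of "Suc a" e] la ua by simp
  qed
qed

end

lemma fst_plus_snd_pt: "i \<le> length p \<Longrightarrow> fst (pt p i) + snd (pt p i) = i"
  using count_list_E_plus_N[of "take i p"] by (simp add: pt_def)

context lattice_path_pair
begin

definition tight_positions :: "nat set" where
  "tight_positions = {a. a \<le> n \<and> hP a = hQ a}"

definition loose_positions :: "nat set" where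
  "loose_positions = {a. 1 \<le> a \<and> a \<le> n \<and> hP a \<noteq> hQ a}"

lemma loose_positions_subset: "loose_positions \<subseteq> {1..<n}"
proof
  fix a assume "a \<in> loose_positions"
  then have "1 \<le> a" "a \<le> n" "hP a \<noteq> hQ a" by (simp_all add: loose_positions_def)
  moreover from this have "a \<noteq> n" using hP_n_eq_hQ_n by blast
  ultimately show "a \<in> {1..<n}" by simp
qed

lemma card_loose_positions: "int (card loose_positions) = int n - int (card tight_positions) + 1"
proof -
  have tight: "0 \<in> tight_positions" "tight_positions \<subseteq> {0..n}"
    by (auto simp: tight_positions_def)
  then have fin: "finite tight_positions" using finite_subset by blast
  have sub: "tight_positions - {0} \<subseteq> {1..n}" using tight by auto
  have "loose_positions = {1..n} - (tight_positions - {0})"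
    by (auto simp: loose_positions_def tight_positions_def)
  then have "card loose_positions = n - card (tight_positions - {0})"
    using card_Diff_subset[OF finite_subset[OF sub] sub] by simp
  moreover have "card (tight_positions - {0}) = card tight_positions - 1"
    using tight(1) fin by simp
  moreover have "card (tight_positions - {0}) \<le> n"
    using card_mono[OF _ sub] by simp
  moreover have "card tight_positions \<noteq> 0"
    using tight(1) fin by auto
  ultimately show ?thesis by linarith
qed

text \<open>Both paths reach the lattice point (x, y) after exactly x + y steps, so common
  points correspond to the positions a where P and Q have the same height.\<close>

lemma common_lattice_points_eq: "lattice_points P \<inter> lattice_points Q = pt P ` tight_positions"
proof (intro equalityI subsetI)
  fix z assume "z \<in> lattice_points P \<inter> lattice_points Q"
  then obtain i j where ij: "i \<le> n" "j \<le> n" "z = pt P i" "z = pt Q j"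
    unfolding lattice_points_def using length_P length_Q by auto
  have "i = fst z + snd z" using fst_plus_snd_pt[of i P] ij length_P by simp
  also have "\<dots> = j" using fst_plus_snd_pt[of j Q] ij length_Q by simp
  finally have "i = j" .
  then have "hP i = hQ i" using ij by (simp add: pt_def)
  then show "z \<in> pt P ` tight_positions" using ij unfolding tight_positions_def by auto
next
  fix z assume "z \<in> pt P ` tight_positions"
  then obtain i where i: "i \<le> n" "hP i = hQ i" "z = pt P i"
    unfolding tight_positions_def by auto
  have "fst (pt P i) = i - hP i" using fst_plus_snd_pt[of i P] i length_P by (simp add: pt_def)
  moreover have "fst (pt Q i) = i - hQ i" using fst_plus_snd_pt[of i Q] i length_Q by (simp add: pt_def)
  ultimately have "pt P i = pt Q i" using i(2) by (simp add: pt_def)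
  moreover have "pt P i \<in> lattice_points P" "pt Q i \<in> lattice_points Q"
    using i(1) length_P length_Q by (simp_all add: lattice_points_def)
  ultimately show "z \<in> lattice_points P \<inter> lattice_points Q" using i(3) by simp
qed

lemma card_common_lattice_points:
  "card (lattice_points P \<inter> lattice_points Q) = card tight_positions"
proof -
  have "inj_on (pt P) tight_positions"
  proof (rule inj_onI)
    fix i j assume ij: "i \<in> tight_positions" "j \<in> tight_positions" "pt P i = pt P j"
    then have "i \<le> length P" "j \<le> length P" using length_P by (auto simp: tight_positions_def)
    then have "i = fst (pt P i) + snd (pt P i)" "j = fst (pt P j) + snd (pt P j)"
      using fst_plus_snd_pt by metis+
    then show "i = j" using ij(3) by simp
  qed
  then show ?thesis unfolding common_lattice_points_eq by (rule card_image)
qed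

end

locale lattice_path_pair_coordinates = lattice_path_pair P Q m r
  for P Q :: "step list" and m r :: nat +
  fixes idx :: "nat \<Rightarrow> 'n::finite"
  assumes bij_idx: "bij_betw idx {1..m+r} (UNIV :: 'n set)"
begin

abbreviation e :: "nat \<Rightarrow> real ^ 'n" where
  "e j \<equiv> axis (idx j) 1"

definition vertices :: "(real ^ 'n) set" where
  "vertices = {(\<Sum>b\<in>B. e b) | B. lpm_basis P Q r B}"

definition base_vertex :: "real ^ 'n" where
  "base_vertex = (\<Sum>b\<in>npos P. e b)"

definition step_vector :: "nat \<Rightarrow> real ^ 'n" where
  "step_vector a = e a - e (Suc a)"

definition tight_subspace :: "(real ^ 'n) set" where
  "tight_subspace = {x. \<forall>a\<in>tight_positions. (\<Sum>j=1..a. x $ idx j) = 0}"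

lemma idx_eq_iff: "a \<in> {1..n} \<Longrightarrow> b \<in> {1..n} \<Longrightarrow> idx a = idx b \<longleftrightarrow> a = b"
  using bij_idx unfolding bij_betw_def inj_on_def by blast

lemma e_nth: "a \<in> {1..n} \<Longrightarrow> j \<in> {1..n} \<Longrightarrow> e a $ idx j = (if a = j then 1 else 0)"
  using idx_eq_iff[of j a] unfolding axis_def by simp

lemma sum_e_nth:
  assumes "B \<subseteq> {1..n}" "j \<in> {1..n}"
  shows "(\<Sum>b\<in>B. e b) $ idx j = (if j \<in> B then 1 else 0)"
proof -
  have "(\<Sum>b\<in>B. e b) $ idx j = (\<Sum>b\<in>B. if b = j then 1 else 0)"
    using assms by (auto simp: e_nth subset_eq intro: sum.cong)
  also have "\<dots> = (if j \<in> B then 1 else 0)"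
    using finite_subset[OF assms(1)] by simp
  finally show ?thesis .
qed

lemma prefix_sum_sum_e:
  assumes "B \<subseteq> {1..n}" "a \<le> n"
  shows "(\<Sum>j=1..a. (\<Sum>b\<in>B. e b) $ idx j) = real (card (B \<inter> {1..a}))"
proof -
  have "(\<Sum>j=1..a. (\<Sum>b\<in>B. e b) $ idx j) = (\<Sum>j\<in>{1..a}. if j \<in> B then 1 else 0)"
  proof (rule sum.cong)
    fix j assume "j \<in> {1..a}"
    then show "(\<Sum>b\<in>B. e b) $ idx j = (if j \<in> B then 1 else 0)"
      using sum_e_nth[OF assms(1)] assms(2) by simp
  qed simp
  also have "\<dots> = real (card (B \<inter> {1..a}))"
    by (simp add: sum.If_cases Int_commute)
  finally show ?thesis .
qed

lemma base_vertex_in_vertices: "base_vertex \<in> vertices"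
  unfolding vertices_def base_vertex_def using lpm_basis_npos_P by blast

lemma translated_vertices_subset: "(+) (- base_vertex) ` vertices \<subseteq> tight_subspace"
proof
  fix y assume "y \<in> (+) (- base_vertex) ` vertices"
  then obtain B where B: "lpm_basis P Q r B" "y = - base_vertex + (\<Sum>b\<in>B. e b)"
    unfolding vertices_def by blast
  show "y \<in> tight_subspace"
  proof (unfold tight_subspace_def, intro CollectI ballI)
    fix a assume "a \<in> tight_positions"
    then have a: "a \<le> n" "hP a = hQ a" unfolding tight_positions_def by auto
    have "(\<Sum>j=1..a. y $ idx j)
            = (\<Sum>j=1..a. (\<Sum>b\<in>B. e b) $ idx j) - (\<Sum>j=1..a. base_vertex $ idx j)"
      unfolding B(2) by (simp add: sum_subtractf)
    also have "\<dots> = real (card (B \<inter> {1..a})) - real (card (npos P \<inter> {1..a}))"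
      using prefix_sum_sum_e[OF lpm_basis_subset[OF B(1)] a(1)]
        prefix_sum_sum_e[OF lpm_basis_subset[OF lpm_basis_npos_P] a(1)]
      unfolding base_vertex_def by simp
    also have "\<dots> = 0"
      using card_lpm_basis_prefix[OF B(1) a] card_lpm_basis_prefix[OF lpm_basis_npos_P a] by simp
    finally show "(\<Sum>j=1..a. y $ idx j) = 0" .
  qed
qed

lemma step_vector_nth:
  assumes "a \<in> {1..<n}" "j \<in> {1..n}"
  shows "step_vector a $ idx j = (if a = j then 1 else 0) - (if Suc a = j then 1 else 0)"
  using e_nth[of a j] e_nth[of "Suc a" j] assms unfolding step_vector_def by simp

text \<open>A vector x of the tight subspace is \<Sum> S_a (e_a - e_{a+1}) over the loose positions a,
  where S_a = \<Sum>_{j \<le> a} x_j; the prefix sums at tight positions vanish.\<close>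

lemma tight_subspace_subset_span: "tight_subspace \<subseteq> span (step_vector ` loose_positions)"
proof
  fix x assume x: "x \<in> tight_subspace"
  define S where "S a = (\<Sum>j=1..a. x $ idx j)" for a
  have S_loose: "(if k \<in> loose_positions then S k else 0) = S k" if "k \<le> n" for k
  proof -
    have "k = 0 \<or> k \<in> tight_positions" if "k \<notin> loose_positions"
      using that \<open>k \<le> n\<close> unfolding loose_positions_def tight_positions_def by auto
    then show ?thesis using x by (auto simp: S_def tight_subspace_def)
  qed
  have fin: "finite loose_positions"
    using loose_positions_subset finite_subset by blast
  have "x = (\<Sum>a\<in>loose_positions. S a *\<^sub>R step_vector a)"
  proof (subst vec_eq_iff, rule allI)
    fix i
    obtain j where j: "j \<in> {1..n}" "i = idx j"
      using bij_idx unfolding bij_betw_def by blast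
    then obtain k where k: "j = Suc k" by (cases j) auto
    have "(\<Sum>a\<in>loose_positions. S a *\<^sub>R step_vector a) $ idx j
            = (\<Sum>a\<in>loose_positions. (if a = j then S a else 0) - (if a = k then S a else 0))"
      using loose_positions_subset j(1) k
      by (auto simp: step_vector_nth subset_eq intro!: sum.cong)
    also have "\<dots> = (if j \<in> loose_positions then S j else 0) - (if k \<in> loose_positions then S k else 0)"
      using fin by (simp add: sum_subtractf)
    also have "\<dots> = S j - S k" using S_loose[of j] S_loose[of k] j(1) k by simp
    also have "\<dots> = x $ idx j" unfolding S_def k by simp
    finally show "x $ i = (\<Sum>a\<in>loose_positions. S a *\<^sub>R step_vector a) $ i" using j(2) by simp
  qed
  also have "\<dots> \<in> span (step_vector ` loose_positions)"
    by (intro span_sum span_scale span_base) auto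
  finally show "x \<in> span (step_vector ` loose_positions)" .
qed

lemma step_vector_in_span: "step_vector ` loose_positions \<subseteq> span ((+) (- base_vertex) ` vertices)"
proof
  fix y assume "y \<in> step_vector ` loose_positions"
  then obtain a where a: "a \<le> n" "hP a \<noteq> hQ a" "y = step_vector a"
    unfolding loose_positions_def by auto
  then obtain B B' where B: "lpm_basis P Q r B" "lpm_basis P Q r B'"
    "(\<Sum>b\<in>B. e b) - (\<Sum>b\<in>B'. e b) = e a - e (Suc a)"
    using exists_lpm_bases_diff by blast
  have "- base_vertex + (\<Sum>b\<in>B. e b) \<in> (+) (- base_vertex) ` vertices"
    "- base_vertex + (\<Sum>b\<in>B'. e b) \<in> (+) (- base_vertex) ` vertices"
    using B(1,2) unfolding vertices_def by blast+
  then have "(- base_vertex + (\<Sum>b\<in>B. e b)) - (- base_vertex + (\<Sum>b\<in>B'. e b))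
               \<in> span ((+) (- base_vertex) ` vertices)"
    by (intro span_diff span_base)
  then show "y \<in> span ((+) (- base_vertex) ` vertices)"
    using B(3) a(3) by (simp add: step_vector_def)
qed

lemma inj_on_step_vector: "inj_on step_vector loose_positions"
proof (rule inj_onI)
  fix a b assume ab: "a \<in> loose_positions" "b \<in> loose_positions" "step_vector a = step_vector b"
  then have "a \<in> {1..<n}" "b \<in> {1..<n}" using loose_positions_subset by auto
  then have "step_vector b $ idx a = (if b = a then 1 else 0) - (if Suc b = a then 1 else 0)"
    "step_vector a $ idx a = 1"
    using step_vector_nth[of b a] step_vector_nth[of a a] by auto
  then show "a = b" using ab(3) by (auto split: if_splits)
qed

text \<open>Induct on the largest loose position b: the coordinate Suc b vanishes on all
  step_vector a with a < b but not on step_vector b.\<close>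

lemma independent_step_vector:
  assumes "A \<subseteq> loose_positions"
  shows "independent (step_vector ` A)"
proof -
  have "finite A"
    using assms loose_positions_subset finite_subset[of A "{1..<n}"] by auto
  then show ?thesis
    using assms
  proof (induction A rule: finite_linorder_max_induct)
    case empty
    then show ?case by (simp add: independent_empty)
  next
    case (insert b A)
    then have b: "b \<in> {1..<n}" and A: "A \<subseteq> loose_positions"
      using loose_positions_subset by auto
    let ?H = "{x :: real ^ 'n. x $ idx (Suc b) = 0}"
    have "step_vector ` A \<subseteq> ?H"
    proof
      fix y assume "y \<in> step_vector ` A"
      then obtain a where "a \<in> A" "y = step_vector a" by blast
      moreover from this have "a \<in> {1..<n}" "a < b"
        using A loose_positions_subset insert.hyps(2) by auto
      ultimately show "y \<in> ?H" using step_vector_nth[of a "Suc b"] b by simp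
    qed
    then have "span (step_vector ` A) \<subseteq> ?H"
      by (rule span_minimal) (simp add: subspace_def)
    moreover have "step_vector b \<notin> ?H" using step_vector_nth[of b "Suc b"] b by simp
    ultimately have "step_vector b \<notin> span (step_vector ` A)" by blast
    then show ?case using independent_insertI insert.IH[OF A] by simp
  qed
qed

lemma aff_dim_vertices: "aff_dim vertices = int (card loose_positions)"
proof -
  let ?D = "(+) (- base_vertex) ` vertices"
  have "span ?D = span (step_vector ` loose_positions)"
  proof (unfold span_eq, intro conjI)
    show "?D \<subseteq> span (step_vector ` loose_positions)"
      using translated_vertices_subset tight_subspace_subset_span by blast
    show "step_vector ` loose_positions \<subseteq> span ?D"
      by (rule step_vector_in_span)
  qed
  then have "dim ?D = dim (step_vector ` loose_positions)"
    by (metis dim_span)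
  also have "\<dots> = card (step_vector ` loose_positions)"
    using dim_eq_card_independent independent_step_vector by blast
  finally have "dim ?D = card (step_vector ` loose_positions)" .
  then show ?thesis
    using aff_dim_eq_dim[OF hull_inc[OF base_vertex_in_vertices]]
      card_image[OF inj_on_step_vector] by simp
qed

end

theorem corollary3p4:
  fixes P Q :: "step list" and m r :: nat and idx :: "nat \<Rightarrow> 'n::finite"
  assumes "is_lattice_path m r P" and "is_lattice_path m r Q"
    and "never_above P Q"
    and "bij_betw idx {1..m+r} (UNIV :: 'n set)"
  shows "aff_dim (lpm_polytope idx P Q r)
           = int (m + r) - int (card (lattice_points P \<inter> lattice_points Q)) + 1"
proof -
  interpret lattice_path_pair_coordinates P Q m r idx
    using assms by unfold_locales
  have "lpm_polytope idx P Q r = convex hull vertices"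
    by (simp add: lpm_polytope_def vertices_def)
  then have "aff_dim (lpm_polytope idx P Q r) = int (card loose_positions)"
    by (simp add: aff_dim_convex_hull aff_dim_vertices)
  then show ?thesis
    using card_loose_positions card_common_lattice_points by simp
qed

end
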